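(* Consider a system of $M$ conservation laws with state space $\mathcal D\subset\mathbb R^M$, entropy variables $\mathbf v=(v^1,\dots,v^M)$, entropy flux potential $\Psi$, and an entropy conservative two-point flux $\mathbf f^{\mathrm{EC}}$, i.e. $(\mathbf v(\mathbf u_R)-\mathbf v(\mathbf u_L))^T\mathbf f^{\mathrm{EC}}(\mathbf u_L,\mathbf u_R)=\Psi(\mathbf u_R)-\Psi(\mathbf u_L)$ for all $\mathbf u_L,\mathbf u_R\in\mathcal D$. Let an element $R$ with $N_R+1$ interface nodes, diagonal positive weight matrix $\mathbf M_R$ and edge length $\Delta_R>0$ share its edge with $E\ge1$ elements $L_1,\dots,L_E$ ($L_i$ with $N_{L_i}+1$ interface nodes, diagonal positive weight matrix $\mathbf M_{L_i}$, edge length $\Delta_{L_i}>0$, $\sum_i\Delta_{L_i}=\Delta_R$), and let $\mathbf P_{L_i2R}\in\mathbb R^{(N_R+1)\times(N_{L_i}+1)}$, $\mathbf P_{R2L_i}\in\mathbb R^{(N_{L_i}+1)\times(N_R+1)}$ satisfy $$\Delta_{L_i}\mathbf P_{R2L_i}^T\mathbf M_{L_i}=\Delta_R\mathbf M_R\mathbf P_{L_i2R},\qquad \mathbf P_{R2L_i}\mathbf 1^R=\mathbf 1^{L_i}\quad(i=1,\dots,E),\qquad \sum_{i=1}^E\mathbf P_{L_i2R}\mathbf 1^{L_i}=\mathbf 1^R.$$ For arbitrary states $\mathbf U^{L_i}_k,\mathbf U^R_j\in\mathcal D$ let $[\mathbf F^q_{L_i,R}]_{kj}=f^{\mathrm{EC},q}(\mathbf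 U^{L_i}_k,\mathbf U^R_j)$, $\mathbf F^{\mathrm{EC},q,R}=\sum_{i=1}^E\mathbb E(\mathbf P_{L_i2R}\mathbf F^q_{L_i,R})$, $\mathbf F^{\mathrm{EC},q,L_i}=\mathbb E(\mathbf P_{R2L_i}(\mathbf F^q_{L_i,R})^T)$, $V^{q,L_i}_k=v^q(\mathbf U^{L_i}_k)$, $V^{q,R}_j=v^q(\mathbf U^R_j)$, $\Psi^{L_i}_k=\Psi(\mathbf U^{L_i}_k)$, $\Psi^R_j=\Psi(\mathbf U^R_j)$. For a scalar $\lambda>0$ define the numerical surface fluxes $$\mathbf F^{\mathrm{ES},q,L_i}=\mathbf F^{\mathrm{EC},q,L_i}-\frac{\lambda}{2}\big(\mathbf P_{R2L_i}\mathbf V^{q,R}-\mathbf V^{q,L_i}\big),\qquad \mathbf F^{\mathrm{ES},q,R}=\mathbf F^{\mathrm{EC},q,R}-\frac{\lambda}{2}\sum_{i=1}^E\mathbf P_{L_i2R}\big(\mathbf P_{R2L_i}\mathbf V^{q,R}-\mathbf V^{q,L_i}\big).$$ Then the scheme is primary conservative and entropy stable at this interface: for every $q=1,\dots,M$, $$\Delta U^q:=\Delta_R(\mathbf 1^R)^T\mathbf M_R\mathbf F^{\mathrm{ES},q,R}-\sum_{i=1}^E\Delta_{L_i}(\mathbf 1^{L_i})^T\mathbf M_{L_i}\mathbf F^{\mathrm{ES},q,L_i}=0,$$ and $$\Delta S:=\Delta_R\Big(\sum_{q=1}^M(\mathbf V^{q,R})^T\mathbf M_R\mathbf F^{\mathrm{ES},q,R}-(\mathbf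 1^R)^T\mathbf M_R\boldsymbol\Psi^R\Big)-\sum_{i=1}^E\Delta_{L_i}\Big(\sum_{q=1}^M(\mathbf V^{q,L_i})^T\mathbf M_{L_i}\mathbf F^{\mathrm{ES},q,L_i}-(\mathbf 1^{L_i})^T\mathbf M_{L_i}\boldsymbol\Psi^{L_i}\Big)\le0.$$
   Context: Setting: a nodal discontinuous Galerkin spectral element method on Legendre–Gauss–Lobatto nodes (summation-by-parts operators) on a rectangular $h/p$ non-conforming mesh; a hyperbolic system with strongly convex entropy $S$, entropy variables $\mathbf v=\partial S/\partial\mathbf u$, entropy flux $F$, and entropy flux potential $\Psi=\mathbf v\cdot\mathbf f-F$ with $\mathbf f$ the interface-normal flux. One element $R$ is adjacent across one edge to $E$ elements $L_1,\dots,L_E$ stacked along that edge ($E=1$ covers the case of a conforming edge with differing polynomial degrees). $\Delta U^q$ and $\Delta S$ are (up to a common positive factor) the contributions of this interface to the time rate of change of the total integral of the $q$-th conserved variable and of the total entropy when entropy conservative volume fluxes are used; "primary conservative" means $\Delta U^q=0$ and "entropy stable" means $\Delta S\le 0$. Notation: $\mathbb E(\mathbf W)$ is the vector of diagonal entries of a square matrix $\mathbf W$; $\mathbf 1^R,\mathbf 1^{L_i}$ are all-ones vectors; $\mathbf V^{q,R},\mathbf V^{q,L_i},\boldsymbol\Psi^R,\boldsymbol\Psi^{L_i}$ are the vectors with the indicated entries. *)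

theory Defs
  imports Complex_Main
begin

text \<open>Index conventions: conserved variables q < M; elements L_i with i < E;
 nodes of R are j \<in> {..NR}, nodes of L_i are k \<in> {..N i}.
 Matrices are functions of indices: PL2R i j k = [P_{L_i2R}]_{jk},
 PR2L i k j = [P_{R2L_i}]_{kj}; diagonal weight matrices by their diagonals wR, w i.
 States are u :: nat \<Rightarrow> real (components q < M).
 fEC uL uR q = q-th component of the two-point flux, v u q = v^q(u).\<close>

type_synonym state = "nat \<Rightarrow> real"

definition FECR ::
  "(state \<Rightarrow> state \<Rightarrow> nat \<Rightarrow> real) \<Rightarrow> nat \<Rightarrow> (nat \<Rightarrow> nat)
   \<Rightarrow> (nat \<Rightarrow> nat \<Rightarrow> nat \<Rightarrow> real) \<Rightarrow> (nat \<Rightarrow> nat \<Rightarrow> state) \<Rightarrow> (nat \<Rightarrow> state)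
   \<Rightarrow> nat \<Rightarrow> nat \<Rightarrow> real" where
  "FECR fEC E N PL2R UL UR q j =
     (\<Sum>i<E. \<Sum>k\<le>N i. PL2R i j k * fEC (UL i k) (UR j) q)"

definition FECL ::
  "(state \<Rightarrow> state \<Rightarrow> nat \<Rightarrow> real) \<Rightarrow> nat
   \<Rightarrow> (nat \<Rightarrow> nat \<Rightarrow> nat \<Rightarrow> real) \<Rightarrow> (nat \<Rightarrow> nat \<Rightarrow> state) \<Rightarrow> (nat \<Rightarrow> state)
   \<Rightarrow> nat \<Rightarrow> nat \<Rightarrow> nat \<Rightarrow> real" where
  "FECL fEC NR PR2L UL UR q i k =
     (\<Sum>j\<le>NR. PR2L i k j * fEC (UL i k) (UR j) q)"

definition jumpL ::
  "(state \<Rightarrow> nat \<Rightarrow> real) \<Rightarrow> nat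
   \<Rightarrow> (nat \<Rightarrow> nat \<Rightarrow> nat \<Rightarrow> real) \<Rightarrow> (nat \<Rightarrow> nat \<Rightarrow> state) \<Rightarrow> (nat \<Rightarrow> state)
   \<Rightarrow> nat \<Rightarrow> nat \<Rightarrow> nat \<Rightarrow> real" where
  "jumpL v NR PR2L UL UR q i k =
     (\<Sum>j\<le>NR. PR2L i k j * v (UR j) q) - v (UL i k) q"

definition FESL ::
  "(state \<Rightarrow> state \<Rightarrow> nat \<Rightarrow> real) \<Rightarrow> (state \<Rightarrow> nat \<Rightarrow> real) \<Rightarrow> real \<Rightarrow> nat
   \<Rightarrow> (nat \<Rightarrow> nat \<Rightarrow> nat \<Rightarrow> real) \<Rightarrow> (nat \<Rightarrow> nat \<Rightarrow> state) \<Rightarrow> (nat \<Rightarrow> state)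
   \<Rightarrow> nat \<Rightarrow> nat \<Rightarrow> nat \<Rightarrow> real" where
  "FESL fEC v lam NR PR2L UL UR q i k =
     FECL fEC NR PR2L UL UR q i k - lam / 2 * jumpL v NR PR2L UL UR q i k"

definition FESR ::
  "(state \<Rightarrow> state \<Rightarrow> nat \<Rightarrow> real) \<Rightarrow> (state \<Rightarrow> nat \<Rightarrow> real) \<Rightarrow> real \<Rightarrow> nat \<Rightarrow> nat
   \<Rightarrow> (nat \<Rightarrow> nat) \<Rightarrow> (nat \<Rightarrow> nat \<Rightarrow> nat \<Rightarrow> real) \<Rightarrow> (nat \<Rightarrow> nat \<Rightarrow> nat \<Rightarrow> real)
   \<Rightarrow> (nat \<Rightarrow> nat \<Rightarrow> state) \<Rightarrow> (nat \<Rightarrow> state) \<Rightarrow> nat \<Rightarrow> nat \<Rightarrow> real" where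
  "FESR fEC v lam NR E N PL2R PR2L UL UR q j =
     FECR fEC E N PL2R UL UR q j
     - lam / 2 * (\<Sum>i<E. \<Sum>k\<le>N i. PL2R i j k * jumpL v NR PR2L UL UR q i k)"

definition DeltaU ::
  "(state \<Rightarrow> state \<Rightarrow> nat \<Rightarrow> real) \<Rightarrow> (state \<Rightarrow> nat \<Rightarrow> real) \<Rightarrow> real
   \<Rightarrow> nat \<Rightarrow> (nat \<Rightarrow> real) \<Rightarrow> real
   \<Rightarrow> nat \<Rightarrow> (nat \<Rightarrow> nat) \<Rightarrow> (nat \<Rightarrow> nat \<Rightarrow> real) \<Rightarrow> (nat \<Rightarrow> real)
   \<Rightarrow> (nat \<Rightarrow> nat \<Rightarrow> nat \<Rightarrow> real) \<Rightarrow> (nat \<Rightarrow> nat \<Rightarrow> nat \<Rightarrow> real)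
   \<Rightarrow> (nat \<Rightarrow> nat \<Rightarrow> state) \<Rightarrow> (nat \<Rightarrow> state) \<Rightarrow> nat \<Rightarrow> real" where
  "DeltaU fEC v lam NR wR DR E N w D PL2R PR2L UL UR q =
     DR * (\<Sum>j\<le>NR. wR j * FESR fEC v lam NR E N PL2R PR2L UL UR q j)
     - (\<Sum>i<E. D i * (\<Sum>k\<le>N i. w i k * FESL fEC v lam NR PR2L UL UR q i k))"

definition DeltaS ::
  "nat \<Rightarrow> (state \<Rightarrow> state \<Rightarrow> nat \<Rightarrow> real) \<Rightarrow> (state \<Rightarrow> nat \<Rightarrow> real) \<Rightarrow> (state \<Rightarrow> real)
   \<Rightarrow> real \<Rightarrow> nat \<Rightarrow> (nat \<Rightarrow> real) \<Rightarrow> real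
   \<Rightarrow> nat \<Rightarrow> (nat \<Rightarrow> nat) \<Rightarrow> (nat \<Rightarrow> nat \<Rightarrow> real) \<Rightarrow> (nat \<Rightarrow> real)
   \<Rightarrow> (nat \<Rightarrow> nat \<Rightarrow> nat \<Rightarrow> real) \<Rightarrow> (nat \<Rightarrow> nat \<Rightarrow> nat \<Rightarrow> real)
   \<Rightarrow> (nat \<Rightarrow> nat \<Rightarrow> state) \<Rightarrow> (nat \<Rightarrow> state) \<Rightarrow> real" where
  "DeltaS M fEC v Psi lam NR wR DR E N w D PL2R PR2L UL UR =
     DR * ((\<Sum>q<M. \<Sum>j\<le>NR. v (UR j) q * wR j * FESR fEC v lam NR E N PL2R PR2L UL UR q j)
           - (\<Sum>j\<le>NR. wR j * Psi (UR j)))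
     - (\<Sum>i<E. D i * ((\<Sum>q<M. \<Sum>k\<le>N i. v (UL i k) q * w i k * FESL fEC v lam NR PR2L UL UR q i k)
                       - (\<Sum>k\<le>N i. w i k * Psi (UL i k))))"

end

theory Submission
  imports Defs
begin

text \<open>The compatibility condition lets the coupling weights
 a(i,j,k) = D_i w_ik [P_{R2L_i}]_{kj} = D_R w^R_j [P_{L_i2R}]_{jk} be read from either side of the
 interface. Both surface fluxes are projection averages of one dissipative two-point flux, so the
 surface terms of R and of the L_i are the same a-weighted triple sum: conservation. For the entropy
 the two sides differ pairwise by (v(U^R_j) - v(U^L_ik)) . f - (Psi(U^R_j) - Psi(U^L_ik)), which
 vanishes for the entropy conservative part of the flux; summing the dissipative remainder over j
 gives -lam/2 D_i w_ik |P_{R2L_i} V^R - V^{L_i}|_k^2.\<close>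

lemma mortar_adjoint:
  fixes h :: "nat \<Rightarrow> nat \<Rightarrow> nat \<Rightarrow> real"
  assumes SBP: "\<And>i j k. i < E \<Longrightarrow> j \<le> NR \<Longrightarrow> k \<le> N i \<Longrightarrow>
               D i * (PR2L i k j * w i k) = DR * (wR j * PL2R i j k)"
  shows "DR * (\<Sum>j\<le>NR. wR j * (\<Sum>i<E. \<Sum>k\<le>N i. PL2R i j k * h i k j))
       = (\<Sum>i<E. D i * (\<Sum>k\<le>N i. w i k * (\<Sum>j\<le>NR. PR2L i k j * h i k j)))"
proof -
  have "DR * (\<Sum>j\<le>NR. wR j * (\<Sum>i<E. \<Sum>k\<le>N i. PL2R i j k * h i k j))
      = (\<Sum>j\<le>NR. \<Sum>i<E. \<Sum>k\<le>N i. DR * (wR j * PL2R i j k) * h i k j)"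
    by (simp add: sum_distrib_left mult.assoc)
  also have "\<dots> = (\<Sum>i<E. \<Sum>k\<le>N i. \<Sum>j\<le>NR. DR * (wR j * PL2R i j k) * h i k j)"
    by (subst sum.swap) (simp add: sum.swap[of _ "{..NR}"])
  also have "\<dots> = (\<Sum>i<E. \<Sum>k\<le>N i. \<Sum>j\<le>NR. D i * (PR2L i k j * w i k) * h i k j)"
    by (intro sum.cong refl) (simp add: SBP)
  also have "\<dots> = (\<Sum>i<E. D i * (\<Sum>k\<le>N i. w i k * (\<Sum>j\<le>NR. PR2L i k j * h i k j)))"
    by (simp add: sum_distrib_left mult_ac)
  finally show ?thesis .
qed

definition dissipative_pair_flux ::
  "(state \<Rightarrow> state \<Rightarrow> nat \<Rightarrow> real) \<Rightarrow> (state \<Rightarrow> nat \<Rightarrow> real) \<Rightarrow> real \<Rightarrow> nat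
   \<Rightarrow> (nat \<Rightarrow> nat \<Rightarrow> nat \<Rightarrow> real) \<Rightarrow> (nat \<Rightarrow> nat \<Rightarrow> state) \<Rightarrow> (nat \<Rightarrow> state)
   \<Rightarrow> nat \<Rightarrow> nat \<Rightarrow> nat \<Rightarrow> nat \<Rightarrow> real" where
  "dissipative_pair_flux fEC v lam NR PR2L UL UR q i k j =
     fEC (UL i k) (UR j) q - lam / 2 * jumpL v NR PR2L UL UR q i k"

lemma FESR_eq_average:
  "FESR fEC v lam NR E N PL2R PR2L UL UR q j
   = (\<Sum>i<E. \<Sum>k\<le>N i. PL2R i j k * dissipative_pair_flux fEC v lam NR PR2L UL UR q i k j)"
  by (simp add: FESR_def FECR_def dissipative_pair_flux_def right_diff_distrib sum_subtractf
      sum_distrib_left algebra_simps)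

lemma FESL_eq_average:
  assumes "(\<Sum>j\<le>NR. PR2L i k j) = 1"
  shows "FESL fEC v lam NR PR2L UL UR q i k
       = (\<Sum>j\<le>NR. PR2L i k j * dissipative_pair_flux fEC v lam NR PR2L UL UR q i k j)"
proof -
  have "(\<Sum>j\<le>NR. PR2L i k j * dissipative_pair_flux fEC v lam NR PR2L UL UR q i k j)
      = FECL fEC NR PR2L UL UR q i k - (\<Sum>j\<le>NR. PR2L i k j) * (lam / 2 * jumpL v NR PR2L UL UR q i k)"
    by (simp add: FECL_def dissipative_pair_flux_def right_diff_distrib sum_subtractf sum_distrib_right)
  then show ?thesis
    using assms by (simp add: FESL_def)
qed

lemma jumpL_eq_average:
  assumes "(\<Sum>j\<le>NR. PR2L i k j) = 1"
  shows "jumpL v NR PR2L UL UR q i k = (\<Sum>j\<le>NR. PR2L i k j * (v (UR j) q - v (UL i k) q))"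
  using assms by (simp add: jumpL_def right_diff_distrib sum_subtractf sum_distrib_right[symmetric])

lemma entropy_conservative_pair_dissipation:
  fixes vL vR f d :: "nat \<Rightarrow> real"
  assumes "(\<Sum>q<M. (vR q - vL q) * f q) = PsiR - PsiL"
  shows "((\<Sum>q<M. vR q * (f q - d q)) - PsiR) - ((\<Sum>q<M. vL q * (f q - d q)) - PsiL)
       = - (\<Sum>q<M. (vR q - vL q) * d q)"
proof -
  have "((\<Sum>q<M. vR q * (f q - d q)) - PsiR) - ((\<Sum>q<M. vL q * (f q - d q)) - PsiL)
      = (\<Sum>q<M. (vR q - vL q) * f q) - (PsiR - PsiL) - (\<Sum>q<M. (vR q - vL q) * d q)"
    by (simp add: sum_subtractf[symmetric] sum.distrib[symmetric] algebra_simps)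
  then show ?thesis
    using assms by simp
qed

lemma DeltaU_eq_0:
  assumes SBP: "\<And>i j k. i < E \<Longrightarrow> j \<le> NR \<Longrightarrow> k \<le> N i \<Longrightarrow>
               D i * (PR2L i k j * w i k) = DR * (wR j * PL2R i j k)"
    and R2L_one: "\<And>i k. i < E \<Longrightarrow> k \<le> N i \<Longrightarrow> (\<Sum>j\<le>NR. PR2L i k j) = 1"
  shows "DeltaU fEC v lam NR wR DR E N w D PL2R PR2L UL UR q = 0"
proof -
  have "(\<Sum>i<E. D i * (\<Sum>k\<le>N i. w i k * FESL fEC v lam NR PR2L UL UR q i k))
      = (\<Sum>i<E. D i * (\<Sum>k\<le>N i. w i k *
           (\<Sum>j\<le>NR. PR2L i k j * dissipative_pair_flux fEC v lam NR PR2L UL UR q i k j)))"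
    by (intro sum.cong refl arg_cong2[where f = "(*)"]) (simp add: FESL_eq_average R2L_one)
  then show ?thesis
    by (simp add: DeltaU_def FESR_eq_average mortar_adjoint[OF SBP])
qed

lemma surface_entropy_R_eq_average:
  assumes L2R_one: "\<And>j. j \<le> NR \<Longrightarrow> (\<Sum>i<E. \<Sum>k\<le>N i. PL2R i j k) = 1"
  shows "(\<Sum>q<M. \<Sum>j\<le>NR. v (UR j) q * wR j * FESR fEC v lam NR E N PL2R PR2L UL UR q j)
           - (\<Sum>j\<le>NR. wR j * Psi (UR j))
       = (\<Sum>j\<le>NR. wR j * (\<Sum>i<E. \<Sum>k\<le>N i. PL2R i j k *
           ((\<Sum>q<M. v (UR j) q * dissipative_pair_flux fEC v lam NR PR2L UL UR q i k j) - Psi (UR j))))"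
proof -
  let ?F = "dissipative_pair_flux fEC v lam NR PR2L UL UR"
  have node: "(\<Sum>i<E. \<Sum>k\<le>N i. PL2R i j k * ((\<Sum>q<M. v (UR j) q * ?F q i k j) - Psi (UR j)))
      = (\<Sum>q<M. v (UR j) q * FESR fEC v lam NR E N PL2R PR2L UL UR q j) - Psi (UR j)"
    if "j \<le> NR" for j
  proof -
    have "(\<Sum>i<E. \<Sum>k\<le>N i. PL2R i j k * ((\<Sum>q<M. v (UR j) q * ?F q i k j) - Psi (UR j)))
        = (\<Sum>i<E. \<Sum>k\<le>N i. \<Sum>q<M. v (UR j) q * (PL2R i j k * ?F q i k j))
          - (\<Sum>i<E. \<Sum>k\<le>N i. PL2R i j k) * Psi (UR j)"
      by (simp add: right_diff_distrib sum_subtractf sum_distrib_left sum_distrib_right mult_ac)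
    also have "(\<Sum>i<E. \<Sum>k\<le>N i. \<Sum>q<M. v (UR j) q * (PL2R i j k * ?F q i k j))
        = (\<Sum>q<M. v (UR j) q * FESR fEC v lam NR E N PL2R PR2L UL UR q j)"
      by (simp add: FESR_eq_average sum_distrib_left sum.swap[of _ "{..<M}"])
    finally show ?thesis
      using L2R_one[OF that] by simp
  qed
  have "(\<Sum>q<M. \<Sum>j\<le>NR. v (UR j) q * wR j * FESR fEC v lam NR E N PL2R PR2L UL UR q j)
        - (\<Sum>j\<le>NR. wR j * Psi (UR j))
      = (\<Sum>j\<le>NR. wR j * ((\<Sum>q<M. v (UR j) q * FESR fEC v lam NR E N PL2R PR2L UL UR q j) - Psi (UR j)))"
    by (subst sum.swap) (simp add: sum_distrib_left right_diff_distrib sum_subtractf mult_ac)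
  also have "\<dots> = (\<Sum>j\<le>NR. wR j * (\<Sum>i<E. \<Sum>k\<le>N i. PL2R i j k *
           ((\<Sum>q<M. v (UR j) q * ?F q i k j) - Psi (UR j))))"
    by (intro sum.cong refl) (simp add: node)
  finally show ?thesis .
qed

lemma surface_entropy_L_eq_average:
  assumes "(\<Sum>j\<le>NR. PR2L i k j) = 1"
  shows "(\<Sum>q<M. v (UL i k) q * FESL fEC v lam NR PR2L UL UR q i k) - Psi (UL i k)
       = (\<Sum>j\<le>NR. PR2L i k j *
           ((\<Sum>q<M. v (UL i k) q * dissipative_pair_flux fEC v lam NR PR2L UL UR q i k j) - Psi (UL i k)))"
proof -
  let ?F = "dissipative_pair_flux fEC v lam NR PR2L UL UR"
  have "(\<Sum>j\<le>NR. PR2L i k j * ((\<Sum>q<M. v (UL i k) q * ?F q i k j) - Psi (UL i k)))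
      = (\<Sum>j\<le>NR. \<Sum>q<M. v (UL i k) q * (PR2L i k j * ?F q i k j))
        - (\<Sum>j\<le>NR. PR2L i k j) * Psi (UL i k)"
    by (simp add: right_diff_distrib sum_subtractf sum_distrib_left sum_distrib_right mult_ac)
  also have "(\<Sum>j\<le>NR. \<Sum>q<M. v (UL i k) q * (PR2L i k j * ?F q i k j))
      = (\<Sum>q<M. v (UL i k) q * FESL fEC v lam NR PR2L UL UR q i k)"
    by (subst sum.swap) (simp add: FESL_eq_average assms sum_distrib_left)
  finally show ?thesis
    using assms by simp
qed

lemma DeltaS_eq_dissipation:
  assumes EC: "\<And>uL uR. uL \<in> Dom \<Longrightarrow> uR \<in> Dom \<Longrightarrow>
               (\<Sum>q<M. (v uR q - v uL q) * fEC uL uR q) = Psi uR - Psi uL"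
    and UL_in: "\<And>i k. i < E \<Longrightarrow> k \<le> N i \<Longrightarrow> UL i k \<in> Dom"
    and UR_in: "\<And>j. j \<le> NR \<Longrightarrow> UR j \<in> Dom"
    and SBP: "\<And>i j k. i < E \<Longrightarrow> j \<le> NR \<Longrightarrow> k \<le> N i \<Longrightarrow>
               D i * (PR2L i k j * w i k) = DR * (wR j * PL2R i j k)"
    and R2L_one: "\<And>i k. i < E \<Longrightarrow> k \<le> N i \<Longrightarrow> (\<Sum>j\<le>NR. PR2L i k j) = 1"
    and L2R_one: "\<And>j. j \<le> NR \<Longrightarrow> (\<Sum>i<E. \<Sum>k\<le>N i. PL2R i j k) = 1"
  shows "DeltaS M fEC v Psi lam NR wR DR E N w D PL2R PR2L UL UR
       = - (lam / 2) * (\<Sum>i<E. D i * (\<Sum>k\<le>N i. w i k * (\<Sum>q<M. (jumpL v NR PR2L UL UR q i k)\<^sup>2)))"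
proof -
  let ?F = "dissipative_pair_flux fEC v lam NR PR2L UL UR"
  let ?J = "jumpL v NR PR2L UL UR"
  define Y where "Y i k j = (\<Sum>q<M. v (UR j) q * ?F q i k j) - Psi (UR j)" for i k j
  define Z where "Z i k j = (\<Sum>q<M. v (UL i k) q * ?F q i k j) - Psi (UL i k)" for i k j
  have pair: "Y i k j - Z i k j = - (\<Sum>q<M. (v (UR j) q - v (UL i k) q) * (lam / 2 * ?J q i k))"
    if "i < E" "k \<le> N i" "j \<le> NR" for i k j
    unfolding Y_def Z_def dissipative_pair_flux_def
    by (rule entropy_conservative_pair_dissipation[OF EC[OF UL_in[OF that(1,2)] UR_in[OF that(3)]]])
  have node: "(\<Sum>j\<le>NR. PR2L i k j * (Y i k j - Z i k j)) = - (lam / 2) * (\<Sum>q<M. (?J q i k)\<^sup>2)"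
    if "i < E" "k \<le> N i" for i k
  proof -
    have "(\<Sum>j\<le>NR. PR2L i k j * (Y i k j - Z i k j))
        = - (lam / 2) * (\<Sum>q<M. ?J q i k * (\<Sum>j\<le>NR. PR2L i k j * (v (UR j) q - v (UL i k) q)))"
      by (simp add: pair that sum_distrib_left sum_negf mult_ac)
        (subst sum.swap, simp)
    then show ?thesis
      by (simp add: jumpL_eq_average[symmetric] R2L_one that power2_eq_square)
  qed
  have R: "DR * ((\<Sum>q<M. \<Sum>j\<le>NR. v (UR j) q * wR j * FESR fEC v lam NR E N PL2R PR2L UL UR q j)
             - (\<Sum>j\<le>NR. wR j * Psi (UR j)))
      = (\<Sum>i<E. D i * (\<Sum>k\<le>N i. w i k * (\<Sum>j\<le>NR. PR2L i k j * Y i k j)))"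
    unfolding Y_def by (simp only: surface_entropy_R_eq_average L2R_one mortar_adjoint[OF SBP])
  have L: "D i * ((\<Sum>q<M. \<Sum>k\<le>N i. v (UL i k) q * w i k * FESL fEC v lam NR PR2L UL UR q i k)
             - (\<Sum>k\<le>N i. w i k * Psi (UL i k)))
      = D i * (\<Sum>k\<le>N i. w i k * (\<Sum>j\<le>NR. PR2L i k j * Z i k j))" if "i < E" for i
  proof -
    have "(\<Sum>q<M. \<Sum>k\<le>N i. v (UL i k) q * w i k * FESL fEC v lam NR PR2L UL UR q i k)
          - (\<Sum>k\<le>N i. w i k * Psi (UL i k))
        = (\<Sum>k\<le>N i. w i k * ((\<Sum>q<M. v (UL i k) q * FESL fEC v lam NR PR2L UL UR q i k) - Psi (UL i k)))"
      by (subst sum.swap) (simp add: sum_distrib_left right_diff_distrib sum_subtractf mult_ac)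
    then show ?thesis
      by (simp add: surface_entropy_L_eq_average R2L_one that Z_def)
  qed
  have "DeltaS M fEC v Psi lam NR wR DR E N w D PL2R PR2L UL UR
      = (\<Sum>i<E. D i * (\<Sum>k\<le>N i. w i k * (\<Sum>j\<le>NR. PR2L i k j * Y i k j)))
        - (\<Sum>i<E. D i * (\<Sum>k\<le>N i. w i k * (\<Sum>j\<le>NR. PR2L i k j * Z i k j)))"
    unfolding DeltaS_def R by (rule arg_cong[OF sum.cong[OF refl L]]) simp
  also have "\<dots> = (\<Sum>i<E. D i * (\<Sum>k\<le>N i. w i k * (\<Sum>j\<le>NR. PR2L i k j * (Y i k j - Z i k j))))"
    by (simp add: sum_subtractf[symmetric] right_diff_distrib[symmetric])
  also have "\<dots> = - (lam / 2) * (\<Sum>i<E. D i * (\<Sum>k\<le>N i. w i k * (\<Sum>q<M. (?J q i k)\<^sup>2)))"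
    by (simp add: node sum_distrib_left mult_ac)
  finally show ?thesis .
qed

theorem theorem2:
  fixes M NR E :: nat
    and Dom :: "state set"
    and v :: "state \<Rightarrow> nat \<Rightarrow> real"
    and Psi :: "state \<Rightarrow> real"
    and fEC :: "state \<Rightarrow> state \<Rightarrow> nat \<Rightarrow> real"
    and wR :: "nat \<Rightarrow> real" and DR :: real
    and N :: "nat \<Rightarrow> nat" and w :: "nat \<Rightarrow> nat \<Rightarrow> real" and D :: "nat \<Rightarrow> real"
    and PL2R PR2L :: "nat \<Rightarrow> nat \<Rightarrow> nat \<Rightarrow> real"
    and UL :: "nat \<Rightarrow> nat \<Rightarrow> state" and UR :: "nat \<Rightarrow> state"
    and lam :: real
  assumes Dom_sub: "Dom \<subseteq> {u. \<forall>q\<ge>M. u q = 0}"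
    and EC: "\<And>uL uR. uL \<in> Dom \<Longrightarrow> uR \<in> Dom \<Longrightarrow>
               (\<Sum>q<M. (v uR q - v uL q) * fEC uL uR q) = Psi uR - Psi uL"
    and wR_pos: "\<And>j. j \<le> NR \<Longrightarrow> wR j > 0"
    and DR_pos: "DR > 0"
    and E_ge1: "E \<ge> 1"
    and w_pos: "\<And>i k. i < E \<Longrightarrow> k \<le> N i \<Longrightarrow> w i k > 0"
    and D_pos: "\<And>i. i < E \<Longrightarrow> D i > 0"
    and D_sum: "(\<Sum>i<E. D i) = DR"
    and SBP: "\<And>i j k. i < E \<Longrightarrow> j \<le> NR \<Longrightarrow> k \<le> N i \<Longrightarrow>
               D i * (PR2L i k j * w i k) = DR * (wR j * PL2R i j k)"
    and R2L_one: "\<And>i k. i < E \<Longrightarrow> k \<le> N i \<Longrightarrow> (\<Sum>j\<le>NR. PR2L i k j) = 1"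
    and L2R_one: "\<And>j. j \<le> NR \<Longrightarrow> (\<Sum>i<E. \<Sum>k\<le>N i. PL2R i j k) = 1"
    and UL_in: "\<And>i k. i < E \<Longrightarrow> k \<le> N i \<Longrightarrow> UL i k \<in> Dom"
    and UR_in: "\<And>j. j \<le> NR \<Longrightarrow> UR j \<in> Dom"
    and lam_pos: "lam > 0"
  shows "(\<forall>q<M. DeltaU fEC v lam NR wR DR E N w D PL2R PR2L UL UR q = 0)
         \<and> DeltaS M fEC v Psi lam NR wR DR E N w D PL2R PR2L UL UR \<le> 0"
proof
  show "\<forall>q<M. DeltaU fEC v lam NR wR DR E N w D PL2R PR2L UL UR q = 0"
    by (blast intro: DeltaU_eq_0 SBP R2L_one)
  have dissipation: "DeltaS M fEC v Psi lam NR wR DR E N w D PL2R PR2L UL UR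
      = - (lam / 2) * (\<Sum>i<E. D i * (\<Sum>k\<le>N i. w i k * (\<Sum>q<M. (jumpL v NR PR2L UL UR q i k)\<^sup>2)))"
    by (rule DeltaS_eq_dissipation[where Dom = Dom]) (simp_all add: EC UL_in UR_in SBP R2L_one L2R_one)
  have "0 \<le> (\<Sum>i<E. D i * (\<Sum>k\<le>N i. w i k * (\<Sum>q<M. (jumpL v NR PR2L UL UR q i k)\<^sup>2)))"
    using D_pos w_pos by (intro sum_nonneg mult_nonneg_nonneg) (auto intro: less_imp_le)
  then show "DeltaS M fEC v Psi lam NR wR DR E N w D PL2R PR2L UL UR \<le> 0"
    using lam_pos by (simp add: dissipation)
qed

end
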